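(* Let $\alpha>0$ and $t>2\pi$, and put $\tau=t/2\pi$. Then \[ S(\tau^\alpha,t)\le 2A\bigl(\tau^{1/2}+2\tau^{\alpha-1/2}\bigr), \] where $A=\frac{2}{\sqrt\pi}(1+\sqrt{1+3\pi/8})$.
   Context: $e(x)=e^{2\pi i x}$, $f(x)=\frac{t}{2\pi}\log x$, and for $X>0$, $S(X,t)=\sup_{0<Y\le X}\bigl|\sum_{X<n\le X+Y}e(f(n))\bigr|$ (sum over integers $n$). *)

theory Defs
  imports "HOL-Analysis.Analysis"
begin

definition e :: "real \<Rightarrow> complex" where
  "e x = exp (2 * of_real pi * \<i> * of_real x)"

definition f :: "real \<Rightarrow> real \<Rightarrow> real" where
  "f t x = t / (2 * pi) * ln x"

definition expsum :: "real \<Rightarrow> real \<Rightarrow> real \<Rightarrow> complex" where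
  "expsum t X Y = (\<Sum>n\<in>{n::int. X < of_int n \<and> of_int n \<le> X + Y}. e (f t (of_int n)))"

definition S :: "real \<Rightarrow> real \<Rightarrow> real" where
  "S X t = (SUP Y\<in>{0<..X}. norm (expsum t X Y))"

end

theory Submission
  imports Defs
begin

text \<open>
  Split the integers \<open>n \<in> (X, X + Y]\<close> according to \<open>k = \<lfloor>\<tau> / n + \<delta>\<rfloor>\<close>, where \<open>\<tau> / n\<close>
  is the derivative of the phase \<open>\<tau> ln n\<close> and \<open>\<delta> = \<surd>\<tau> / (4 X)\<close>. Terms with \<open>\<tau> / n\<close>
  within \<open>\<delta>\<close> of \<open>k\<close> are estimated trivially, at most \<open>8 \<delta> X\<^sup>2 / \<tau> + 1\<close> of them per \<open>k\<close>.
  The others form a run of consecutive integers on which the phase differences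
  \<open>\<tau> (ln (n + 1) - ln n) - k\<close> decrease and stay in \<open>[\<delta>, 1 - \<delta>]\<close>, so by the
  Kusmin--Landau inequality their sum is at most \<open>cot (\<pi> \<delta> / 2) + 1 \<le> 2 / (\<pi> \<delta>) + 1\<close>.
  With at most \<open>\<tau> / (2 X) + 2\<close> values of \<open>k\<close> this gives
  \<open>11/2 \<surd>\<tau> + 11 X / \<surd>\<tau>\<close> for \<open>\<tau> \<ge> 100\<close> and \<open>X \<ge> \<surd>\<tau> / 2\<close>; otherwise the trivial
  bound \<open>Y + 1\<close> suffices. Since \<open>A \<ge> 11/4\<close>, the claimed bound follows.
\<close>

lemma e_cis: "e x = cis (2 * pi * x)"
  unfolding e_def cis_conv_exp by (simp add: mult.commute mult.left_commute)

lemma e_add: "e (x + y) = e x * e y"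
  unfolding e_cis by (simp add: distrib_left cis_mult)

lemma norm_e [simp]: "norm (e x) = 1"
  unfolding e_cis by simp

lemma e_of_int [simp]: "e (of_int k) = 1"
  unfolding e_cis by (metis cis_multiple_2pi Ints_of_int mult.commute)

lemma norm_sum_e_le_card: "norm (\<Sum>n\<in>A. e (g n)) \<le> real (card A)"
  using norm_sum[of "\<lambda>n. e (g n)" A] by simp

lemma e_minus_one_times_cot:
  assumes "0 < \<theta>" "\<theta> < 1"
  shows "(e \<theta> - 1) * (- (1 + \<i> * of_real (cot (pi * \<theta>))) / 2) = 1"
proof -
  define x where "x = pi * \<theta>"
  have "sin x > 0"
    unfolding x_def using assms by (intro sin_gt_zero) auto
  moreover have e_\<theta>: "e \<theta> = Complex (1 - 2 * sin x ^ 2) (2 * sin x * cos x)"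
    unfolding e_cis x_def by (simp add: cis.ctr mult.assoc cos_double_sin sin_double)
  ultimately show ?thesis
    unfolding e_\<theta> x_def[symmetric] cot_def
    by (simp add: complex_eq_iff field_simps power2_eq_square)
      (use sin_cos_squared_add3[of x] in algebra)
qed

lemma norm_one_plus_i_cot:
  assumes "sin y > 0"
  shows "norm (1 + \<i> * of_real (cot y)) = 1 / sin y"
proof -
  have "1 + \<i> * of_real (cot y) = Complex 1 (cot y)"
    by (simp add: complex_eq_iff)
  moreover have "1 + (cot y)\<^sup>2 = (1 / sin y)\<^sup>2"
    unfolding cot_def using assms sin_cos_squared_add3[of y]
    by (simp add: field_simps power2_eq_square)
  ultimately show ?thesis
    using assms by (simp add: cmod_def)
qed

lemma cot_antimono:
  assumes "0 < a" "a \<le> b" "b < pi"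
  shows "cot b \<le> cot a"
proof -
  have "sin a > 0" "sin b > 0"
    using assms by (auto intro!: sin_gt_zero)
  moreover have "sin (b - a) \<ge> 0"
    using assms by (intro sin_ge_zero) auto
  ultimately show ?thesis
    unfolding cot_def sin_diff by (simp add: divide_simps mult.commute)
qed

lemma cot_pi_minus: "cot (pi - x) = - cot x"
  unfolding cot_def by simp

lemma cot_le_inverse:
  assumes "0 < y" "y < pi / 2"
  shows "cot y \<le> 1 / y"
proof -
  have "y \<le> tan y"
    using abs_tan_ge[of y] tan_gt_zero[of y] assms by simp
  then show ?thesis
    using assms by (simp add: cot_altdef divide_simps)
qed

lemma inverse_sin_plus_cot:
  assumes "0 < x" "x < pi"
  shows "1 / sin x + cot x = cot (x / 2)"
proof -
  define y where "y = x / 2"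
  have "sin y > 0" "cos y > 0"
    using assms unfolding y_def by (auto intro!: sin_gt_zero cos_gt_zero)
  moreover have "1 / sin x + cot x = 1 / sin (2 * y) + cot (2 * y)"
    unfolding y_def by simp
  ultimately show ?thesis
    unfolding y_def[symmetric] cot_def sin_double cos_double_cos
    by (simp add: field_simps power2_eq_square)
qed

lemma sin_pi_mult_ge:
  assumes "0 < \<delta>" "\<delta> \<le> D" "D \<le> 1 - \<delta>"
  shows "sin (pi * \<delta>) \<le> sin (pi * D)"
proof -
  have "sin (pi * (1 - D)) = sin (pi * D)"
    by (simp add: right_diff_distrib sin_diff)
  then have "sin (pi * min D (1 - D)) = sin (pi * D)"
    by (simp add: min_def)
  moreover have "0 < pi * \<delta>" "pi * \<delta> \<le> pi * min D (1 - D)" "pi * min D (1 - D) \<le> pi / 2"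
    using assms by (auto simp: min_def)
  then have "sin (pi * \<delta>) \<le> sin (pi * min D (1 - D))"
    by (intro sin_monotone_2pi_le) (use pi_gt_zero in linarith)+
  ultimately show ?thesis
    by simp
qed

lemma norm_one_plus_i_cot_pi_mult_le:
  assumes "0 < \<delta>" "\<delta> \<le> D" "D \<le> 1 - \<delta>"
  shows "norm (1 + \<i> * of_real (cot (pi * D))) \<le> 1 / sin (pi * \<delta>)"
proof -
  have "0 < sin (pi * \<delta>)"
    using assms by (intro sin_gt_zero) auto
  moreover have "sin (pi * \<delta>) \<le> sin (pi * D)"
    using assms by (rule sin_pi_mult_ge)
  ultimately show ?thesis
    by (simp add: norm_one_plus_i_cot frac_le)
qed

lemma abs_cot_pi_mult_le:
  assumes "0 < \<delta>" "\<delta> \<le> D" "D \<le> 1 - \<delta>"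
  shows "\<bar>cot (pi * D)\<bar> \<le> cot (pi * \<delta>)"
proof -
  have "cot (pi * D) \<le> cot (pi * \<delta>)"
    using assms by (intro cot_antimono) auto
  moreover have "pi * D \<le> pi * (1 - \<delta>)"
    using assms by (intro mult_left_mono) auto
  then have "cot (pi - pi * \<delta>) \<le> cot (pi * D)"
    using assms by (intro cot_antimono) (auto simp: right_diff_distrib)
  ultimately show ?thesis
    unfolding cot_pi_minus by linarith
qed

lemma sum_atMost_Suc_by_parts:
  fixes E c :: "nat \<Rightarrow> 'a::comm_ring_1"
  assumes "\<And>j. j \<le> n \<Longrightarrow> E j = c j * (E (Suc j) - E j)"
  shows "(\<Sum>j\<le>Suc n. E j)
    = (c n + 1) * E (Suc n) - c 0 * E 0 + (\<Sum>j<n. (c j - c (Suc j)) * E (Suc j))"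
  using assms
proof (induction n)
  case 0
  then show ?case by (simp add: algebra_simps)
next
  case (Suc n)
  have IH: "(\<Sum>j\<le>Suc n. E j)
      = (c n + 1) * E (Suc n) - c 0 * E 0 + (\<Sum>j<n. (c j - c (Suc j)) * E (Suc j))"
    using Suc by simp
  have step: "E (Suc n) = c (Suc n) * (E (Suc (Suc n)) - E (Suc n))"
    using Suc.prems by simp
  have "(\<Sum>j\<le>Suc (Suc n). E j) = (\<Sum>j\<le>Suc n. E j) + E (Suc (Suc n))"
    by simp
  also have "\<dots> = (c n + 1) * E (Suc n) - c 0 * E 0 + (\<Sum>j<n. (c j - c (Suc j)) * E (Suc j))
      + (c (Suc n) * (E (Suc (Suc n)) - E (Suc n)) + E (Suc (Suc n)) - E (Suc n))"
    by (subst IH, subst (2) step) simp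
  finally show ?case
    by (simp add: algebra_simps)
qed

lemma norm_sum_by_parts_le:
  fixes E c :: "nat \<Rightarrow> complex"
  assumes "\<And>j. j \<le> n \<Longrightarrow> E j = c j * (E (Suc j) - E j)"
    and "\<And>j. norm (E j) = 1" and "\<And>j. j \<le> n \<Longrightarrow> norm (c j) \<le> C"
  shows "norm (\<Sum>j\<le>Suc n. E j) \<le> 2 * C + 1 + (\<Sum>j<n. norm (c j - c (Suc j)))"
proof -
  have "(\<Sum>j\<le>Suc n. E j)
      = (c n + 1) * E (Suc n) - c 0 * E 0 + (\<Sum>j<n. (c j - c (Suc j)) * E (Suc j))"
    using assms(1) by (rule sum_atMost_Suc_by_parts)
  then have "norm (\<Sum>j\<le>Suc n. E j)
      \<le> norm ((c n + 1) * E (Suc n)) + norm (c 0 * E 0) + norm (\<Sum>j<n. (c j - c (Suc j)) * E (Suc j))"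
    by (simp only:) (intro order.trans[OF norm_triangle_ineq] add_mono order.trans[OF norm_triangle_ineq4] order_refl)
  also have "norm ((c n + 1) * E (Suc n)) \<le> C + 1"
    using norm_triangle_ineq[of "c n" 1] assms(2)[of "Suc n"] assms(3)[of n] by (simp add: norm_mult)
  also have "norm (c 0 * E 0) \<le> C"
    using assms(2,3)[of 0] by (simp add: norm_mult)
  also have "norm (\<Sum>j<n. (c j - c (Suc j)) * E (Suc j)) \<le> (\<Sum>j<n. norm (c j - c (Suc j)))"
    using norm_sum[of "\<lambda>j. (c j - c (Suc j)) * E (Suc j)" "{..<n}"] assms(2) by (simp add: norm_mult)
  finally show ?thesis
    by simp
qed

lemma kusmin_landau:
  fixes \<phi> :: "nat \<Rightarrow> real" and k :: int
  assumes gap: "\<And>j. j < L \<Longrightarrow> \<delta> \<le> \<phi> (Suc j) - \<phi> j - k \<and> \<phi> (Suc j) - \<phi> j - k \<le> 1 - \<delta>"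
    and concave: "\<And>j. Suc j < L \<Longrightarrow> \<phi> (Suc (Suc j)) - \<phi> (Suc j) \<le> \<phi> (Suc j) - \<phi> j"
    and \<delta>: "0 < \<delta>" "\<delta> \<le> 1/2"
  shows "norm (\<Sum>j\<le>L. e (\<phi> j)) \<le> cot (pi * \<delta> / 2) + 1"
proof (cases L)
  case 0
  have "0 \<le> cot (pi * \<delta> / 2)"
    using \<delta> by (intro less_imp_le cot_gt_zero) auto
  with 0 show ?thesis
    by simp
next
  case (Suc n)
  define D where "D j = \<phi> (Suc j) - \<phi> j - k" for j
  \<comment> \<open>\<open>c j = 1 / (e (D j) - 1)\<close>, so that each term becomes \<open>c j\<close> times a difference of terms\<close>
  define c where "c j = - (1 + \<i> * of_real (cot (pi * D j))) / 2" for j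
  have D: "\<delta> \<le> D j" "D j \<le> 1 - \<delta>" if "j \<le> n" for j
    using gap[of j] that Suc unfolding D_def by auto
  have "e (\<phi> j) = c j * (e (\<phi> (Suc j)) - e (\<phi> j))" if "j \<le> n" for j
  proof -
    have "\<phi> (Suc j) = \<phi> j + D j + of_int k"
      unfolding D_def by simp
    then have "c j * (e (\<phi> (Suc j)) - e (\<phi> j)) = e (\<phi> j) * ((e (D j) - 1) * c j)"
      by (simp add: e_add algebra_simps)
    also have "(e (D j) - 1) * c j = 1"
      unfolding c_def using D[OF that] \<delta> by (intro e_minus_one_times_cot) auto
    finally show ?thesis
      by simp
  qed
  moreover have "norm (c j) \<le> 1 / (2 * sin (pi * \<delta>))" if "j \<le> n" for j
    using norm_one_plus_i_cot_pi_mult_le[OF \<delta>(1) D[OF that]]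
    unfolding c_def norm_divide norm_minus_cancel by simp
  ultimately have "norm (\<Sum>j\<le>L. e (\<phi> j))
      \<le> 2 * (1 / (2 * sin (pi * \<delta>))) + 1 + (\<Sum>j<n. norm (c j - c (Suc j)))"
    unfolding Suc by (intro norm_sum_by_parts_le) auto
  also have "(\<Sum>j<n. norm (c j - c (Suc j))) = (\<Sum>j<n. cot (pi * D (Suc j)) / 2 - cot (pi * D j) / 2)"
  proof (intro sum.cong refl)
    fix j assume "j \<in> {..<n}"
    then have "D (Suc j) \<le> D j"
      using concave[of j] Suc unfolding D_def by auto
    then have "cot (pi * D j) \<le> cot (pi * D (Suc j))"
      using D[of j] D[of "Suc j"] \<open>j \<in> {..<n}\<close> \<delta>
      by (intro cot_antimono) (auto simp: field_simps)
    moreover have "c j - c (Suc j) = \<i> * of_real (cot (pi * D (Suc j)) / 2 - cot (pi * D j) / 2)"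
      unfolding c_def by (simp add: field_simps)
    ultimately show "norm (c j - c (Suc j)) = cot (pi * D (Suc j)) / 2 - cot (pi * D j) / 2"
      by (simp add: norm_mult del: of_real_diff)
  qed
  also have "\<dots> \<le> cot (pi * \<delta>)"
    unfolding sum_lessThan_telescope[of "\<lambda>j. cot (pi * D j) / 2"]
    using abs_cot_pi_mult_le[OF \<delta>(1) D[of n]] abs_cot_pi_mult_le[OF \<delta>(1) D[of 0]] by simp
  also have "2 * (1 / (2 * sin (pi * \<delta>))) + 1 + cot (pi * \<delta>) = cot (pi * \<delta> / 2) + 1"
    using \<delta> by (simp add: inverse_sin_plus_cot flip: add.assoc)
  finally show ?thesis
    by simp
qed

lemma ln_add_one_diff_bounds:
  fixes x :: real
  assumes "0 < x"
  shows "1 / (x + 1) \<le> ln (x + 1) - ln x" "ln (x + 1) - ln x \<le> 1 / x"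
proof -
  have "ln (x / (x + 1)) \<le> x / (x + 1) - 1" "ln ((x + 1) / x) \<le> (x + 1) / x - 1"
    using assms by (intro ln_le_minus_one; simp)+
  then show "1 / (x + 1) \<le> ln (x + 1) - ln x" "ln (x + 1) - ln x \<le> 1 / x"
    using assms by (simp_all add: ln_div field_simps)
qed

lemma finite_int_between: "finite {n::int. (a::real) < of_int n \<and> of_int n \<le> (b::real)}"
  by (rule finite_subset[of _ "{\<lfloor>a\<rfloor>..\<lceil>b\<rceil>}"])
    (auto simp: floor_le_iff le_ceiling_iff intro: less_imp_le)

lemma card_le_diameter_int:
  fixes S :: "int set"
  assumes "finite S" "0 \<le> L" "\<And>a b. a \<in> S \<Longrightarrow> b \<in> S \<Longrightarrow> of_int (b - a) \<le> L"
  shows "real (card S) \<le> L + 1"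
proof (cases "S = {}")
  case False
  have "Min S \<le> Max S" "of_int (Max S - Min S) \<le> L"
    using assms(1,3) False by auto
  moreover have "card S \<le> card {Min S..Max S}"
    using assms(1) by (intro card_mono) auto
  ultimately show ?thesis
    by simp
qed (use assms in simp)

lemma order_convex_int_set_eq_atLeastAtMost:
  fixes S :: "int set"
  assumes "finite S" "S \<noteq> {}" "\<And>a b n. a \<in> S \<Longrightarrow> b \<in> S \<Longrightarrow> a \<le> n \<Longrightarrow> n \<le> b \<Longrightarrow> n \<in> S"
  shows "S = {Min S..Max S}"
proof
  show "S \<subseteq> {Min S..Max S}"
    using assms(1) by auto
  show "{Min S..Max S} \<subseteq> S"
  proof
    fix n assume "n \<in> {Min S..Max S}"
    then show "n \<in> S"
      using assms(3)[of "Min S" "Max S" n] assms(1,2) by simp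
  qed
qed

lemma sum_int_atLeastAtMost_as_nat:
  fixes M N :: int
  assumes "M \<le> N"
  shows "(\<Sum>n=M..N. h n) = (\<Sum>j\<le>nat (N - M). h (M + int j))"
proof -
  have "n \<in> (\<lambda>j. M + int j) ` {..nat (N - M)}" if "n \<in> {M..N}" for n
    using that by (intro image_eqI[of _ _ "nat (n - M)"]) auto
  then have "{M..N} = (\<lambda>j. M + int j) ` {..nat (N - M)}"
    using assms by auto
  moreover have "inj_on (\<lambda>j. M + int j) {..nat (N - M)}"
    by (auto simp: inj_on_def)
  ultimately show ?thesis
    by (simp add: sum.reindex)
qed

lemma norm_sum_e_log_atLeastAtMost_le:
  fixes \<tau> \<delta> :: real and k M N :: int
  assumes "0 < \<tau>" "0 < \<delta>" "\<delta> \<le> 1/2" "0 < M"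
    and window: "\<And>n. M \<le> n \<Longrightarrow> n \<le> N \<Longrightarrow> k + \<delta> \<le> \<tau> / n \<and> \<tau> / n \<le> k + 1 - \<delta>"
  shows "norm (\<Sum>n=M..N. e (\<tau> * ln n)) \<le> 2 / (pi * \<delta>) + 1"
proof (cases "M \<le> N")
  case True
  define x where "x j = real_of_int M + real j" for j
  define \<phi> where "\<phi> j = \<tau> * ln (x j)" for j
  have x_pos: "0 < x j" for j
    using assms by (simp add: x_def)
  have x_Suc: "x (Suc j) = x j + 1" for j
    by (simp add: x_def)
  have \<phi>_diff: "\<phi> (Suc j) - \<phi> j = \<tau> * (ln (x j + 1) - ln (x j))" for j
    by (simp add: \<phi>_def x_Suc right_diff_distrib)
  have "norm (\<Sum>j\<le>nat (N - M). e (\<phi> j)) \<le> cot (pi * \<delta> / 2) + 1"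
  proof (rule kusmin_landau)
    fix j assume "j < nat (N - M)"
    then have "k + \<delta> \<le> \<tau> / (x j + 1)" "\<tau> / x j \<le> k + 1 - \<delta>"
      using window[of "M + int j"] window[of "M + int j + 1"] by (auto simp: x_def add.assoc)
    moreover have "\<tau> * (1 / (x j + 1)) \<le> \<phi> (Suc j) - \<phi> j" "\<phi> (Suc j) - \<phi> j \<le> \<tau> * (1 / x j)"
      unfolding \<phi>_diff using ln_add_one_diff_bounds[OF x_pos] \<open>0 < \<tau>\<close>
      by (intro mult_left_mono; simp)+
    ultimately show "\<delta> \<le> \<phi> (Suc j) - \<phi> j - k \<and> \<phi> (Suc j) - \<phi> j - k \<le> 1 - \<delta>"
      by simp
  next
    fix j
    have "ln (x j + 1 + 1) - ln (x j + 1) \<le> ln (x j + 1) - ln (x j)"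
      using ln_add_one_diff_bounds(2)[of "x j + 1"] ln_add_one_diff_bounds(1)[OF x_pos[of j]] x_pos[of j]
      by linarith
    then show "\<phi> (Suc (Suc j)) - \<phi> (Suc j) \<le> \<phi> (Suc j) - \<phi> j"
      unfolding \<phi>_diff x_Suc using \<open>0 < \<tau>\<close> by (intro mult_left_mono) auto
  qed (use assms in auto)
  also have "cot (pi * \<delta> / 2) \<le> 2 / (pi * \<delta>)"
    using cot_le_inverse[of "pi * \<delta> / 2"] assms by simp
  finally show ?thesis
    using True by (simp add: sum_int_atLeastAtMost_as_nat \<phi>_def x_def)
qed (use assms in simp)

lemma card_reciprocal_window_le:
  fixes X \<tau> w a :: real
  assumes "0 < X" "0 < \<tau>" "0 \<le> w"
  shows "real (card {n::int. X < n \<and> n \<le> 2 * X \<and> a \<le> \<tau> / n \<and> \<tau> / n < a + w})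
    \<le> 4 * w * X\<^sup>2 / \<tau> + 1"
proof (rule card_le_diameter_int)
  show "finite {n::int. X < n \<and> n \<le> 2 * X \<and> a \<le> \<tau> / n \<and> \<tau> / n < a + w}"
    by (rule finite_subset[OF _ finite_int_between[of X "2 * X"]]) auto
  fix m n assume "m \<in> {n::int. X < n \<and> n \<le> 2 * X \<and> a \<le> \<tau> / n \<and> \<tau> / n < a + w}"
    "n \<in> {n::int. X < n \<and> n \<le> 2 * X \<and> a \<le> \<tau> / n \<and> \<tau> / n < a + w}"
  then have m: "X < m" "m \<le> 2 * X" "\<tau> / m < a + w" and n: "X < n" "n \<le> 2 * X" "a \<le> \<tau> / n"
    by auto
  have "real_of_int m * n \<le> (2 * X) * (2 * X)"
    using m n assms by (intro mult_mono) auto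
  have "real_of_int (n - m) * \<tau> = (\<tau> / m - \<tau> / n) * (m * n)"
    using m n assms by (simp add: field_simps)
  also have "\<dots> \<le> w * ((2 * X) * (2 * X))"
    using m n assms \<open>real_of_int m * n \<le> (2 * X) * (2 * X)\<close> by (intro mult_mono) auto
  finally show "real_of_int (n - m) \<le> 4 * w * X\<^sup>2 / \<tau>"
    using assms by (simp add: field_simps power2_eq_square)
qed (use assms in simp)

lemma card_floor_reciprocal_image_le:
  fixes X Y \<tau> \<delta> :: real
  assumes "0 < X" "0 < Y" "Y \<le> X" "0 < \<tau>"
  shows "real (card ((\<lambda>n. \<lfloor>\<tau> / of_int n + \<delta>\<rfloor>) ` {n::int. X < n \<and> n \<le> X + Y})) \<le> \<tau> / (2 * X) + 2"
proof -
  have "real (card ((\<lambda>n. \<lfloor>\<tau> / of_int n + \<delta>\<rfloor>) ` {n::int. X < n \<and> n \<le> X + Y})) \<le> (\<tau> / (2 * X) + 1) + 1"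
  proof (rule card_le_diameter_int)
    show "finite ((\<lambda>n. \<lfloor>\<tau> / of_int n + \<delta>\<rfloor>) ` {n::int. X < n \<and> n \<le> X + Y})"
      by (intro finite_imageI finite_int_between)
    show "0 \<le> \<tau> / (2 * X) + 1"
      using assms by simp
    fix k l assume "k \<in> (\<lambda>n. \<lfloor>\<tau> / of_int n + \<delta>\<rfloor>) ` {n::int. X < n \<and> n \<le> X + Y}"
      "l \<in> (\<lambda>n. \<lfloor>\<tau> / of_int n + \<delta>\<rfloor>) ` {n::int. X < n \<and> n \<le> X + Y}"
    then obtain m n :: int where m: "X < m" "m \<le> X + Y" "k = \<lfloor>\<tau> / m + \<delta>\<rfloor>"
      and n: "X < n" "n \<le> X + Y" "l = \<lfloor>\<tau> / n + \<delta>\<rfloor>"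
      by blast
    have "\<tau> / m + \<delta> < of_int k + 1" "of_int l \<le> \<tau> / n + \<delta>"
      unfolding m(3) n(3) by linarith+
    moreover have "\<tau> / (2 * X) \<le> \<tau> / (X + Y)"
      using assms by (intro divide_left_mono) auto
    moreover have "\<tau> / (X + Y) \<le> \<tau> / m"
      using assms m by (intro divide_left_mono) auto
    moreover have "\<tau> / n \<le> \<tau> / X"
      using assms n by (intro divide_left_mono) auto
    moreover have "\<tau> / X = 2 * (\<tau> / (2 * X))"
      by simp
    ultimately show "real_of_int (l - k) \<le> \<tau> / (2 * X) + 1"
      by linarith
  qed
  then show ?thesis
    by simp
qed

lemma norm_sum_e_log_window_le:
  fixes X Z \<tau> \<delta> :: real and k :: int
  assumes "0 < X" "0 < \<tau>" "0 < \<delta>" "\<delta> \<le> 1/2"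
  shows "norm (\<Sum>n\<in>{n::int. X < n \<and> n \<le> Z \<and> k + \<delta> \<le> \<tau> / n \<and> \<tau> / n < k + 1 - \<delta>}. e (\<tau> * ln n))
    \<le> 2 / (pi * \<delta>) + 1"
  (is "norm (\<Sum>n\<in>?G. _) \<le> _")
proof (cases "?G = {}")
  case False
  define M N where "M = Min ?G" and "N = Max ?G"
  have finite: "finite ?G"
    by (rule finite_subset[OF _ finite_int_between[of X Z]]) auto
  have G_eq: "?G = {M..N}"
    unfolding M_def N_def
  proof (rule order_convex_int_set_eq_atLeastAtMost[OF finite False])
    fix a b n assume "a \<in> ?G" "b \<in> ?G" "a \<le> n" "n \<le> b"
    moreover have "\<tau> / b \<le> \<tau> / n" "\<tau> / n \<le> \<tau> / a"
      using calculation assms by (intro divide_left_mono; simp)+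
    ultimately show "n \<in> ?G"
      by auto
  qed
  have "norm (\<Sum>n=M..N. e (\<tau> * ln n)) \<le> 2 / (pi * \<delta>) + 1"
  proof (rule norm_sum_e_log_atLeastAtMost_le[OF assms(2-4)])
    show "0 < M"
      using Min_in[OF finite False] assms unfolding M_def by auto
    fix n assume "M \<le> n" "n \<le> N"
    then have "n \<in> ?G"
      unfolding G_eq by simp
    then show "k + \<delta> \<le> \<tau> / n \<and> \<tau> / n \<le> k + 1 - \<delta>"
      by simp
  qed
  then show ?thesis
    unfolding G_eq .
next
  case True
  then show ?thesis
    unfolding True using assms by simp
qed

lemma norm_sum_e_log_cell_le:
  fixes X Y \<tau> \<delta> :: real and k :: int
  assumes "0 < X" "Y \<le> X" "0 < \<tau>" "0 < \<delta>" "\<delta> \<le> 1/2"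
  shows "norm (\<Sum>n\<in>{n::int. X < n \<and> n \<le> X + Y \<and> \<lfloor>\<tau> / n + \<delta>\<rfloor> = k}. e (\<tau> * ln n))
    \<le> 8 * \<delta> * X\<^sup>2 / \<tau> + 2 / (pi * \<delta>) + 2"
proof -
  define C where "C = {n::int. X < n \<and> n \<le> X + Y \<and> \<lfloor>\<tau> / n + \<delta>\<rfloor> = k}"
  define W where "W = {n::int. \<tau> / n < k + \<delta>}"
  define B where "B = {n::int. X < n \<and> n \<le> X + Y \<and> k - \<delta> \<le> \<tau> / n \<and> \<tau> / n < k + \<delta>}"
  define G where "G = {n::int. X < n \<and> n \<le> X + Y \<and> k + \<delta> \<le> \<tau> / n \<and> \<tau> / n < k + 1 - \<delta>}"
  have "C \<inter> W = B" "C - W = G"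
    unfolding B_def C_def G_def W_def floor_eq_iff using assms by auto
  moreover have "finite C"
    unfolding C_def by (rule finite_subset[OF _ finite_int_between[of X "X + Y"]]) auto
  then have "(\<Sum>n\<in>C. e (\<tau> * ln n)) = (\<Sum>n\<in>C \<inter> W. e (\<tau> * ln n)) + (\<Sum>n\<in>C - W. e (\<tau> * ln n))"
    by (rule sum.Int_Diff)
  ultimately have "norm (\<Sum>n\<in>C. e (\<tau> * ln n)) \<le> norm (\<Sum>n\<in>B. e (\<tau> * ln n)) + norm (\<Sum>n\<in>G. e (\<tau> * ln n))"
    by (simp add: norm_triangle_ineq)
  moreover have "norm (\<Sum>n\<in>B. e (\<tau> * ln n)) \<le> 8 * \<delta> * X\<^sup>2 / \<tau> + 1"
  proof -
    have "B \<subseteq> {n::int. X < n \<and> n \<le> 2 * X \<and> k - \<delta> \<le> \<tau> / n \<and> \<tau> / n < (k - \<delta>) + 2 * \<delta>}"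
      unfolding B_def using assms by auto
    then have "card B \<le> card {n::int. X < n \<and> n \<le> 2 * X \<and> k - \<delta> \<le> \<tau> / n \<and> \<tau> / n < (k - \<delta>) + 2 * \<delta>}"
      by (intro card_mono) (auto intro: finite_subset[OF _ finite_int_between[of X "2 * X"]])
    also note card_reciprocal_window_le[of X \<tau> "2 * \<delta>" "k - \<delta>"]
    finally show ?thesis
      using norm_sum_e_le_card[of "\<lambda>n. \<tau> * ln n" B] assms by simp
  qed
  moreover have "norm (\<Sum>n\<in>G. e (\<tau> * ln n)) \<le> 2 / (pi * \<delta>) + 1"
    unfolding G_def using assms by (intro norm_sum_e_log_window_le) auto
  ultimately show ?thesis
    unfolding C_def by simp
qed

lemma cell_estimate_numeric:
  fixes r u :: real
  assumes "10 \<le> r" "1/2 \<le> u"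
  shows "(r / (2 * u) + 2) * (2 * u + 8 * u / pi + 2) \<le> 11/2 * r + 11 * u"
proof -
  have "(r / (2 * u) + 2) * (2 * u + 8 * u / pi + 2) = r + r / u + 4 * (r / pi) + 16 * (u / pi) + 4 * u + 4"
    using assms by (simp add: field_simps)
  moreover have "r / u \<le> 2 * r"
    using assms by (simp add: field_simps)
  moreover have "r / pi \<le> r / 3" "u / pi \<le> u / 3"
    using assms pi_gt3 by (intro divide_left_mono; simp)+
  ultimately show ?thesis
    using assms by linarith
qed

lemma norm_sum_e_log_le_sqrt:
  fixes X Y \<tau> :: real
  assumes "100 \<le> \<tau>" "sqrt \<tau> / 2 \<le> X" "0 < Y" "Y \<le> X"
  shows "norm (\<Sum>n\<in>{n::int. X < n \<and> n \<le> X + Y}. e (\<tau> * ln n)) \<le> 11/2 * sqrt \<tau> + 11 * (X / sqrt \<tau>)"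
proof -
  define r u where "r = sqrt \<tau>" and "u = X / r"
  \<comment> \<open>\<open>\<delta> = \<surd>\<tau> / (4 X)\<close> balances the trivial and the Kusmin--Landau part of each cell\<close>
  define \<delta> where "\<delta> = 1 / (4 * u)"
  define N where "N = {n::int. X < n \<and> n \<le> X + Y}"
  define \<kappa> where "\<kappa> n = \<lfloor>\<tau> / of_int n + \<delta>\<rfloor>" for n :: int
  have r: "10 \<le> r"
    unfolding r_def using real_le_rsqrt[of 10 \<tau>] assms by simp
  have \<tau>: "\<tau> = r\<^sup>2" and X: "X = u * r" and u: "1/2 \<le> u"
    using assms r by (auto simp: r_def u_def field_simps)
  have \<delta>: "0 < \<delta>" "\<delta> \<le> 1/2"
    unfolding \<delta>_def using u by (auto simp: field_simps)
  define bound where "bound = 8 * \<delta> * X\<^sup>2 / \<tau> + 2 / (pi * \<delta>) + 2"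
  have cell: "norm (\<Sum>n\<in>{n\<in>N. \<kappa> n = k}. e (\<tau> * ln n)) \<le> bound" for k
  proof -
    have "{n\<in>N. \<kappa> n = k} = {n::int. X < n \<and> n \<le> X + Y \<and> \<lfloor>\<tau> / n + \<delta>\<rfloor> = k}"
      unfolding N_def \<kappa>_def by auto
    then show ?thesis
      unfolding bound_def using assms r u \<delta> \<tau>
      by (simp add: norm_sum_e_log_cell_le)
  qed
  have "norm (\<Sum>n\<in>N. e (\<tau> * ln n)) = norm (\<Sum>k\<in>\<kappa> ` N. \<Sum>n\<in>{n\<in>N. \<kappa> n = k}. e (\<tau> * ln n))"
    unfolding N_def by (subst sum.image_gen[OF finite_int_between]) (rule refl)
  also have "\<dots> \<le> (\<Sum>k\<in>\<kappa> ` N. norm (\<Sum>n\<in>{n\<in>N. \<kappa> n = k}. e (\<tau> * ln n)))"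
    by (rule norm_sum)
  also have "\<dots> \<le> real (card (\<kappa> ` N)) * bound"
    using cell by (rule sum_bounded_above)
  also have "\<dots> \<le> (\<tau> / (2 * X) + 2) * bound"
    unfolding N_def \<kappa>_def using assms r u \<delta>
    by (intro mult_right_mono card_floor_reciprocal_image_le) (auto simp: bound_def)
  also have "\<dots> = (r / (2 * u) + 2) * (2 * u + 8 * u / pi + 2)"
    unfolding bound_def \<delta>_def \<tau> X using r u by (simp add: field_simps power2_eq_square)
  also have "\<dots> \<le> 11/2 * r + 11 * u"
    using r u by (rule cell_estimate_numeric)
  finally show ?thesis
    unfolding N_def r_def u_def .
qed

lemma norm_expsum_le_length:
  assumes "0 \<le> Y"
  shows "norm (expsum t X Y) \<le> Y + 1"
proof -
  have "real (card {n::int. X < n \<and> n \<le> X + Y}) \<le> Y + 1"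
    using assms by (intro card_le_diameter_int finite_int_between) auto
  then show ?thesis
    unfolding expsum_def
    using norm_sum_e_le_card[of "\<lambda>n. f t (of_int n)" "{n::int. X < n \<and> n \<le> X + Y}"] by linarith
qed

lemma norm_expsum_le:
  fixes t X Y :: real
  assumes "2 * pi < t" "0 < Y" "Y \<le> X"
  shows "norm (expsum t X Y) \<le> 11/2 * sqrt (t / (2 * pi)) + 11 * (X / sqrt (t / (2 * pi)))"
proof -
  define \<tau> where "\<tau> = t / (2 * pi)"
  have "1 < \<tau>"
    unfolding \<tau>_def using assms by simp
  then have r: "1 < sqrt \<tau>"
    by simp
  show ?thesis
  proof (cases "100 \<le> \<tau> \<and> sqrt \<tau> / 2 \<le> X")
    case True
    have "expsum t X Y = (\<Sum>n\<in>{n::int. X < n \<and> n \<le> X + Y}. e (\<tau> * ln n))"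
      unfolding expsum_def f_def \<tau>_def ..
    with True show ?thesis
      using norm_sum_e_log_le_sqrt[of \<tau> X Y] assms unfolding \<tau>_def by simp
  next
    case False
    then consider "\<tau> < 100" | "X < sqrt \<tau> / 2"
      by linarith
    then have "X + 1 \<le> 11/2 * sqrt \<tau> + 11 * (X / sqrt \<tau>)"
    proof cases
      case 1
      then have "sqrt \<tau> < 10"
        using real_sqrt_less_mono[of \<tau> 100] by simp
      then have "X \<le> 11 * (X / sqrt \<tau>)"
        using assms r by (simp add: field_simps)
      then show ?thesis
        using r by linarith
    next
      case 2
      moreover have "0 \<le> X / sqrt \<tau>"
        using assms r by simp
      ultimately show ?thesis
        using r by linarith
    qed
    then show ?thesis
      using norm_expsum_le_length[of Y t X] assms unfolding \<tau>_def by linarith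
  qed
qed

lemma eleven_quarters_le_A: "11/4 \<le> 2 / sqrt pi * (1 + sqrt (1 + 3 * pi / 8))"
proof -
  have "sqrt pi \<le> 16/9"
    using pi_approx(2) by (intro real_le_lsqrt) (auto simp: power2_eq_square)
  moreover have "13/9 \<le> sqrt (1 + 3 * pi / 8)"
    using pi_gt3 by (intro real_le_rsqrt) (simp add: power2_eq_square)
  ultimately have "2 / (16/9) * (1 + 13/9) \<le> 2 / sqrt pi * (1 + sqrt (1 + 3 * pi / 8))"
    by (intro mult_mono divide_left_mono) auto
  then show ?thesis
    by simp
qed

theorem proposition18:
  fixes \<alpha> t :: real
  assumes "\<alpha> > 0" and "t > 2 * pi"
  defines "\<tau> \<equiv> t / (2 * pi)"
  defines "A \<equiv> 2 / sqrt pi * (1 + sqrt (1 + 3 * pi / 8))"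
  shows "S (\<tau> powr \<alpha>) t \<le> 2 * A * (\<tau> powr (1/2) + 2 * \<tau> powr (\<alpha> - 1/2))"
proof -
  define X where "X = \<tau> powr \<alpha>"
  have "1 < \<tau>"
    unfolding \<tau>_def using assms by simp
  then have "0 < X" "\<tau> powr (1/2) = sqrt \<tau>" "\<tau> powr (\<alpha> - 1/2) = X / sqrt \<tau>"
    unfolding X_def by (simp_all add: powr_half_sqrt powr_diff)
  moreover have "S X t \<le> 11/2 * sqrt \<tau> + 11 * (X / sqrt \<tau>)"
    unfolding S_def \<tau>_def using \<open>0 < X\<close> assms(2)
    by (intro cSUP_least norm_expsum_le) auto
  moreover have "11/2 * sqrt \<tau> + 11 * (X / sqrt \<tau>) = 2 * (11/4) * (sqrt \<tau> + 2 * (X / sqrt \<tau>))"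
    by simp
  moreover have "\<dots> \<le> 2 * A * (sqrt \<tau> + 2 * (X / sqrt \<tau>))"
    using eleven_quarters_le_A \<open>0 < X\<close> \<open>1 < \<tau>\<close> unfolding A_def
    by (intro mult_right_mono mult_left_mono) auto
  ultimately show ?thesis
    unfolding X_def by simp
qed

end
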